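(* Let $q$ be a prime power, $F=\mathbb{F}_q$, $m\ge1$ with $\gcd(q,m)=1$, and $R=F[x]/\langle x^m-1\rangle$. Let $C\subseteq R^2$ be the quasi-cyclic code (R-submodule) generated by one element $(g_{11}(x),g_{12}(x))$, where $g_{11}(x)\mid x^m-1$ and $\deg g_{12}<m$. Let $g(x)=\gcd(g_{11}(x),g_{12}(x))$. Then $C$ is Euclidean LCD if and only if $$\gcd\left(\frac{x^m-1}{g(x)},\ g_{11}(x)\bar g_{11}(x)+g_{12}(x)\bar g_{12}(x)\right)=1.$$
   Context: Elements of $R$ are represented by polynomials of degree $<m$ and identified with their coefficient vectors in $F^m$; a quasi-cyclic code of length $2m$ and index 2 is an $R$-submodule of $R^2$. The Euclidean inner product of $(a_1,a_2),(b_1,b_2)\in R^2$ is the sum of the standard dot products of the coefficient vectors of $a_1,b_1$ and of $a_2,b_2$; $C$ is Euclidean LCD if $C\cap C^{\perp_e}=\{0\}$. For a polynomial $f$ of degree at most $m$, $\bar f(x)=x^m f(x^{-1})$. *)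

theory Defs
  imports "HOL-Computational_Algebra.Computational_Algebra"
begin

definition xm1 :: "nat \<Rightarrow> 'a::comm_ring_1 poly" where
  "xm1 m = monom 1 m - 1"

text \<open>Elements of R are represented by polynomials of degree < m; R^2 by pairs of such.\<close>
definition R2 :: "nat \<Rightarrow> ('a::comm_ring_1 poly \<times> 'a poly) set" where
  "R2 m = {(a, b). degree a < m \<and> degree b < m}"

definition qc_code :: "nat \<Rightarrow> 'a::field poly \<Rightarrow> 'a poly \<Rightarrow> ('a poly \<times> 'a poly) set" where
  "qc_code m g11 g12 = {(a * g11 mod xm1 m, a * g12 mod xm1 m) | a. True}"

definition eucl_ip :: "nat \<Rightarrow> ('a::comm_ring_1 poly \<times> 'a poly) \<Rightarrow> ('a poly \<times> 'a poly) \<Rightarrow> 'a" where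
  "eucl_ip m u v = (\<Sum>i<m. coeff (fst u) i * coeff (fst v) i + coeff (snd u) i * coeff (snd v) i)"

definition eucl_dual :: "nat \<Rightarrow> ('a::comm_ring_1 poly \<times> 'a poly) set \<Rightarrow> ('a poly \<times> 'a poly) set" where
  "eucl_dual m C = {v \<in> R2 m. \<forall>c\<in>C. eucl_ip m c v = 0}"

definition euclidean_LCD :: "nat \<Rightarrow> ('a::comm_ring_1 poly \<times> 'a poly) set \<Rightarrow> bool" where
  "euclidean_LCD m C \<longleftrightarrow> C \<inter> eucl_dual m C = {(0, 0)}"

text \<open>bar f(x) = x^m f(1/x), for deg f \<le> m.\<close>
definition reflect_m :: "nat \<Rightarrow> 'a::comm_ring_1 poly \<Rightarrow> 'a poly" where
  "reflect_m m f = (\<Sum>i\<le>m. monom (coeff f (m - i)) i)"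

end

theory Submission
  imports Defs "HOL-Number_Theory.Cong"
begin

text \<open>Write \<open>N = x^m - 1\<close>, \<open>f\<^sup>* = reflect_m m f\<close> and \<open>G = g11 g11\<^sup>* + g12 g12\<^sup>*\<close>.
  The constant coefficient of \<open>u v\<^sup>* mod N\<close> is the dot product of the coefficient vectors of
  \<open>u\<close> and \<open>v\<close>, and \<open>v\<^sup>*\<close> agrees modulo \<open>N\<close> with \<open>v(x\<^sup>-\<^sup>1)\<close>. Hence \<open>(v1, v2)\<close> is orthogonal
  to \<open>C\<close> iff \<open>N\<close> divides \<open>g11 v1\<^sup>* + g12 v2\<^sup>*\<close>, and the codeword \<open>a (g11, g12)\<close> lies in the
  dual iff \<open>N\<close> divides \<open>a(x\<^sup>-\<^sup>1) G\<close>, i.e. iff \<open>N\<close> divides \<open>a G\<close>, because \<open>G\<close> is invariant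
  under \<open>x \<mapsto> x\<^sup>-\<^sup>1\<close>. The codeword vanishes iff \<open>h = N / gcd g11 g12\<close> divides \<open>a\<close>. So \<open>C\<close>
  is LCD iff \<open>N | a G\<close> forces \<open>h | a\<close>; as \<open>gcd(q, m) = 1\<close> makes \<open>N\<close> squarefree, this
  happens iff \<open>h\<close> and \<open>G\<close> are coprime.\<close>

lemma degree_xm1: "m \<ge> 1 \<Longrightarrow> degree (xm1 m :: 'a::field poly) = m"
  unfolding xm1_def using degree_add_eq_left[of "-1" "monom 1 m"] by (simp add: degree_monom_eq)

lemma xm1_neq_0: "m \<ge> 1 \<Longrightarrow> xm1 m \<noteq> (0 :: 'a::field poly)"
  using degree_xm1[of m] by (metis degree_0 not_one_le_zero)

lemma degree_mod_xm1_less: "m \<ge> 1 \<Longrightarrow> degree (p mod xm1 m :: 'a::field poly) < m"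
  using degree_mod_less[OF xm1_neq_0[of m], of p] by (auto simp: degree_xm1)

lemma monom_cong_xm1:
  assumes "a mod m = b mod m"
  shows "[monom c a = (monom c b :: 'a::field poly)] (mod xm1 m)"
proof -
  have reduce: "[monom c k = (monom c (k mod m) :: 'a poly)] (mod xm1 m)" for k
  proof -
    have "monom c k = monom c (k mod m) * (monom 1 m) ^ (k div m)"
      by (simp add: monom_power mult_monom)
    also have "[\<dots> = monom c (k mod m) * 1 ^ (k div m)] (mod xm1 m)"
      by (intro cong_mult cong_pow cong_refl) (simp add: xm1_def cong_iff_dvd_diff)
    finally show ?thesis by simp
  qed
  show ?thesis using reduce[of a] reduce[of b] assms by (metis cong_sym cong_trans)
qed

lemma coeff_0_mod_xm1:
  assumes "m \<ge> 1" "degree w < 2 * m"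
  shows "coeff (w mod xm1 m) 0 = coeff w 0 + coeff (w :: 'a::field poly) m"
proof -
  define w' where "w' = poly_cutoff m w + poly_shift m w"
  have split: "w = poly_cutoff m w + monom 1 m * poly_shift m w"
    by (rule poly_eqI) (simp add: coeff_poly_cutoff coeff_poly_shift coeff_monom_mult)
  have "w - w' = xm1 m * poly_shift m w"
    unfolding w'_def xm1_def by (subst split) (simp add: algebra_simps)
  then have "w mod xm1 m = w' mod xm1 m" by (simp add: cong_iff_dvd_diff flip: cong_def)
  also have "w' mod xm1 m = w'"
  proof (rule mod_poly_less)
    have "degree w' \<le> m - 1"
    proof (rule degree_le, intro allI impI)
      fix i assume i: "m - 1 < i"
      then have "coeff w (i + m) = 0" using assms(2) by (intro coeff_eq_0) simp
      with i show "coeff w' i = 0" by (simp add: w'_def coeff_poly_cutoff coeff_poly_shift)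
    qed
    then show "degree w' < degree (xm1 m :: 'a poly)" using assms(1) by (simp add: degree_xm1)
  qed
  finally show ?thesis using assms(1) by (simp add: w'_def coeff_poly_cutoff coeff_poly_shift)
qed

text \<open>Adding 1 permutes the finite ring, so the sum of all its elements equals itself plus
  \<open>card UNIV\<close>.\<close>
lemma of_nat_card_UNIV_eq_0: "of_nat (card (UNIV :: 'a::{finite,comm_ring_1} set)) = (0::'a)"
proof -
  have "(\<Sum>y\<in>(UNIV::'a set). y + 1) = (\<Sum>y\<in>UNIV. y)"
    by (rule sum.reindex_bij_witness[of _ "\<lambda>y. y - 1" "\<lambda>y. y + 1"]; simp)
  then show ?thesis by (simp add: sum.distrib)
qed

lemma of_nat_neq_0_if_coprime_card:
  assumes "coprime (card (UNIV :: 'a::{finite,field} set)) m"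
  shows "of_nat m \<noteq> (0::'a)"
proof
  assume "of_nat m = (0::'a)"
  then have "CHAR('a) dvd m" by (simp add: of_nat_eq_0_iff_char_dvd)
  moreover have "CHAR('a) dvd card (UNIV :: 'a set)"
    using of_nat_card_UNIV_eq_0[where 'a='a] by (simp add: of_nat_eq_0_iff_char_dvd)
  ultimately have "CHAR('a) dvd 1" using assms by (metis coprime_common_divisor)
  then show False using of_nat_CHAR[where 'a='a] by simp
qed

text \<open>A square factor of \<open>x^m - 1\<close> would divide its derivative \<open>m x^(m-1)\<close> and hence \<open>x^m\<close>.\<close>
lemma squarefree_xm1:
  assumes m: "m \<ge> 1" and char: "of_nat m \<noteq> (0::'a::field)"
  shows "squarefree (xm1 m :: 'a poly)"
proof (rule squarefreeI)
  fix c :: "'a poly" assume "c ^ 2 dvd xm1 m"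
  then obtain t where t: "xm1 m = c * c * t" unfolding power2_eq_square by (rule dvdE)
  have "pderiv (xm1 m :: 'a poly) = smult (of_nat m) (monom 1 (m - 1))"
    by (simp add: xm1_def pderiv_diff pderiv_monom smult_monom)
  moreover have "c dvd pderiv (xm1 m)" unfolding t by (simp add: pderiv_mult)
  ultimately have "c dvd monom 1 (m - 1)" using char by (simp add: dvd_smult_cancel)
  moreover have "monom (1::'a) m = monom 1 1 * monom 1 (m - 1)" using m by (simp add: mult_monom)
  ultimately have "c dvd monom 1 m" by simp
  moreover have "c dvd xm1 m" unfolding t by (simp add: mult.assoc)
  ultimately have "c dvd monom 1 m - xm1 m" by (rule dvd_diff)
  then show "is_unit c" by (simp add: xm1_def)
qed

text \<open>Since \<open>x^m = 1\<close> in \<open>R\<close>, \<open>x^(m-1)\<close> is the inverse of \<open>x\<close>: \<open>xinv m p\<close> represents \<open>p(x\<^sup>-\<^sup>1)\<close>.\<close>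
definition xinv :: "nat \<Rightarrow> 'a::comm_ring_1 poly \<Rightarrow> 'a poly" where
  "xinv m p = pcompose p (monom 1 (m - 1))"

lemma pcompose_monom_monom: "pcompose (monom c n) (monom 1 k) = (monom c (n * k) :: 'a::comm_ring_1 poly)"
  by (simp add: pcompose_altdef map_poly_monom poly_monom monom_power smult_monom mult.commute)

lemma xinv_0 [simp]: "xinv m 0 = 0"
  and xinv_add [simp]: "xinv m (p + q) = xinv m p + xinv m q"
  and xinv_diff [simp]: "xinv m (p - q) = xinv m p - xinv m q"
  and xinv_mult [simp]: "xinv m (p * q) = xinv m p * xinv m q"
  and xinv_monom [simp]: "xinv m (monom c k) = monom c (k * (m - 1))"
  by (simp_all add: xinv_def pcompose_add pcompose_diff pcompose_mult pcompose_monom_monom)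

lemma pcompose_cong:
  assumes "[q1 = q2] (mod (n :: 'a::field poly))"
  shows "[pcompose p q1 = pcompose p q2] (mod n)"
proof (induction p)
  case (pCons a p)
  then show ?case by (simp add: pcompose_pCons cong_add cong_mult assms)
qed simp

lemma xinv_cong:
  assumes "[p = q] (mod xm1 m)"
  shows "[xinv m p = xinv m (q :: 'a::field poly)] (mod xm1 m)"
proof -
  obtain r where r: "p - q = xm1 m * r" using assms by (auto simp: cong_iff_dvd_diff)
  have "xinv m (xm1 m) = monom 1 (m * (m - 1)) - (1 :: 'a poly)"
    by (simp add: xm1_def flip: monom_eq_1)
  also have "[\<dots> = monom 1 0 - 1] (mod xm1 m)"
    by (intro cong_diff cong_refl monom_cong_xm1) simp
  finally have "xm1 m dvd xinv m (xm1 m :: 'a poly)" by (simp add: cong_0_iff)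
  then have "xm1 m dvd xinv m (p - q)" unfolding r by simp
  then show ?thesis by (simp add: cong_iff_dvd_diff)
qed

lemma xm1_dvd_xinv: "xm1 m dvd p \<Longrightarrow> xm1 m dvd xinv m (p :: 'a::field poly)"
  using xinv_cong[of p 0 m] by (simp add: cong_0_iff)

lemma xinv_xinv:
  assumes "m \<ge> 1"
  shows "[xinv m (xinv m p) = (p :: 'a::field poly)] (mod xm1 m)"
proof -
  obtain k where m: "m = Suc k" using assms by (cases m) auto
  have "(k * k) mod Suc k = 1 mod Suc k"
  proof (cases k)
    case (Suc j)
    have "Suc j * Suc j = 1 + j * Suc (Suc j)" by simp
    moreover have "(1 + j * Suc (Suc j)) mod Suc (Suc j) = 1 mod Suc (Suc j)"
      by (rule mod_mult_self1)
    ultimately show ?thesis unfolding Suc by simp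
  qed simp
  then have sq: "((m - 1) * (m - 1)) mod m = 1 mod m" by (simp add: m)
  have "xinv m (xinv m p) = pcompose p (monom 1 ((m - 1) * (m - 1)))"
    by (simp add: xinv_def pcompose_monom_monom flip: pcompose_assoc)
  also have "[\<dots> = pcompose p (monom 1 1)] (mod xm1 m)"
    by (intro pcompose_cong monom_cong_xm1 sq)
  also have "pcompose p (monom 1 1) = p"
    by (metis pcompose_idR one_pCons monom_Suc monom_0 One_nat_def)
  finally show ?thesis .
qed

lemma coeff_reflect_m: "coeff (reflect_m m f) j = (if j \<le> m then coeff f (m - j) else 0)"
proof -
  have "coeff (reflect_m m f) j = (\<Sum>i\<le>m. if i = j then coeff f (m - i) else 0)"
    unfolding reflect_m_def coeff_sum coeff_monom by (rule refl)
  then show ?thesis by (simp add: sum.delta)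
qed

lemma degree_reflect_m_le: "degree (reflect_m m f) \<le> m"
  by (rule degree_le) (simp add: coeff_reflect_m)

lemma reflect_m_cong_xinv:
  assumes "m \<ge> 1" "degree u \<le> m"
  shows "[reflect_m m u = xinv m (u :: 'a::field poly)] (mod xm1 m)"
proof -
  have exponent: "(m - j) mod m = (j * (m - 1)) mod m" if "j \<le> m" for j
  proof -
    txt \<open>Adding \<open>j\<close> to either side gives a multiple of \<open>m\<close>.\<close>
    obtain k where m: "m = Suc k" using assms(1) by (cases m) auto
    have e1: "Suc k - j + j = Suc k" and e2: "j * k + j = j * Suc k" using that m by simp_all
    have "[Suc k - j + j = j * k + j] (mod Suc k)"
      unfolding e1 e2 by (simp only: cong_def mod_self mod_mult_self2_is_0)
    then have "[Suc k - j = j * k] (mod Suc k)" by (simp only: cong_add_rcancel_nat)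
    then show ?thesis unfolding m cong_def by simp
  qed
  have "reflect_m m u = (\<Sum>i\<le>m. monom (coeff u i) (m - i))"
    unfolding reflect_m_def
    by (rule sum.reindex_bij_witness[of _ "\<lambda>i. m - i" "\<lambda>i. m - i"]; auto)
  also have "[\<dots> = (\<Sum>i\<le>m. monom (coeff u i) (i * (m - 1)))] (mod xm1 m)"
    by (intro cong_sum monom_cong_xm1 exponent) simp
  also have "(\<Sum>i\<le>m. monom (coeff u i) (i * (m - 1))) = xinv m u"
    by (subst (2) poly_as_sum_of_monoms'[OF assms(2), symmetric])
       (simp add: xinv_def pcompose_sum pcompose_monom_monom)
  finally show ?thesis .
qed

lemma sum_coeff_mult_eq_coeff_0_mod_xm1:
  assumes m: "m \<ge> 1" and u: "degree u < m" and v: "degree v < m"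
  shows "(\<Sum>i<m. coeff u i * coeff v i) = coeff (u * reflect_m m v mod xm1 m) (0 :: nat)"
proof -
  have dw: "degree (u * reflect_m m (v :: 'a::field poly)) < 2 * m"
    using degree_mult_le[of u "reflect_m m v"] degree_reflect_m_le[of m v] u by linarith
  have "coeff (u * reflect_m m v) 0 = 0"
    using v by (simp add: coeff_mult coeff_reflect_m coeff_eq_0)
  moreover have "coeff (u * reflect_m m v) m = (\<Sum>i\<le>m. coeff u i * coeff v i)"
    unfolding coeff_mult by (rule sum.cong) (auto simp: coeff_reflect_m)
  moreover have "\<dots> = (\<Sum>i<m. coeff u i * coeff v i)"
    using u by (simp add: lessThan_Suc_atMost[symmetric] coeff_eq_0)
  ultimately show ?thesis using coeff_0_mod_xm1[OF m dw] by simp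
qed

text \<open>Multiplying by \<open>x^k\<close> moves the coefficient of \<open>x^(m-k)\<close> to the constant term.\<close>
lemma xm1_dvd_iff_coeff_0_mod_xm1:
  assumes m: "m \<ge> 1"
  shows "xm1 m dvd P \<longleftrightarrow> (\<forall>a. coeff (a * P mod xm1 m) 0 = (0 :: 'a::field))"
proof (intro iffI allI)
  assume h: "\<forall>a. coeff (a * P mod xm1 m) 0 = 0"
  define r where "r = P mod xm1 m"
  have dr: "degree r < m" unfolding r_def using degree_mod_xm1_less[OF m] .
  have low: "coeff r j = 0" if j: "j < m" for j
  proof -
    define k where "k = m - j"
    have dw: "degree (monom 1 k * r) < 2 * m"
      using degree_mult_le[of "monom 1 k" r] dr j by (simp add: degree_monom_eq k_def)
    have "0 = coeff (monom 1 k * P mod xm1 m) 0" using h by simp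
    also have "\<dots> = coeff (monom 1 k * r mod xm1 m) 0"
      unfolding r_def by (simp add: mod_mult_right_eq)
    also have "\<dots> = coeff r j" using coeff_0_mod_xm1[OF m dw] j by (simp add: coeff_monom_mult k_def)
    finally show ?thesis by simp
  qed
  have "r = 0"
  proof (rule poly_eqI)
    show "coeff r j = coeff 0 j" for j using low[of j] dr by (cases "j < m") (auto simp: coeff_eq_0)
  qed
  then show "xm1 m dvd P" unfolding r_def by (simp add: dvd_eq_mod_eq_0)
qed (simp add: dvd_imp_mod_0 dvd_mult)

lemma eucl_ip_qc_codeword:
  assumes m: "m \<ge> 1" and v: "v \<in> R2 m"
  shows "eucl_ip m (a * g11 mod xm1 m, a * g12 mod xm1 m) v =
    coeff (a * (g11 * reflect_m m (fst v) + g12 * reflect_m m (snd v)) mod xm1 m) (0 :: nat)"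
proof -
  obtain v1 v2 where vv: "v = (v1, v2)" "degree v1 < m" "degree (v2 :: 'a::field poly) < m"
    using v by (auto simp: R2_def)
  let ?X = "(a * g11 mod xm1 m) * reflect_m m v1" and ?Y = "(a * g12 mod xm1 m) * reflect_m m v2"
  have "eucl_ip m (a * g11 mod xm1 m, a * g12 mod xm1 m) v =
      coeff (?X mod xm1 m) 0 + coeff (?Y mod xm1 m) 0"
    unfolding eucl_ip_def vv fst_conv snd_conv sum.distrib
    using sum_coeff_mult_eq_coeff_0_mod_xm1[OF m degree_mod_xm1_less[OF m] vv(2)]
      sum_coeff_mult_eq_coeff_0_mod_xm1[OF m degree_mod_xm1_less[OF m] vv(3)] by simp
  also have "\<dots> = coeff ((?X + ?Y) mod xm1 m) 0" by (simp add: poly_mod_add_left)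
  also have "(?X + ?Y) mod xm1 m = a * (g11 * reflect_m m v1 + g12 * reflect_m m v2) mod xm1 m"
  proof -
    have "[?X + ?Y = (a * g11) * reflect_m m v1 + (a * g12) * reflect_m m v2] (mod xm1 m)"
      by (intro cong_add cong_mult cong_refl) (simp_all add: cong_def)
    then show ?thesis by (simp add: cong_def algebra_simps)
  qed
  finally show ?thesis by (simp add: vv)
qed

lemma orthogonal_qc_code_iff:
  assumes "m \<ge> 1" "v \<in> R2 m"
  shows "(\<forall>c\<in>qc_code m g11 g12. eucl_ip m c v = 0) \<longleftrightarrow>
    xm1 m dvd (g11 * reflect_m m (fst v) + g12 * reflect_m m (snd v) :: 'a::field poly)"
proof -
  have "(\<forall>c\<in>qc_code m g11 g12. eucl_ip m c v = 0) \<longleftrightarrow>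
      (\<forall>a. eucl_ip m (a * g11 mod xm1 m, a * g12 mod xm1 m) v = 0)"
    unfolding qc_code_def by blast
  then show ?thesis
    unfolding xm1_dvd_iff_coeff_0_mod_xm1[OF assms(1)] by (simp add: eucl_ip_qc_codeword[OF assms])
qed

lemma mult_reflect_m_mod_xm1_cong:
  assumes m: "m \<ge> 1" and dg: "degree g \<le> m"
  shows "[g * reflect_m m (a * g mod xm1 m) = xinv m a * (g * reflect_m m (g :: 'a::field poly))] (mod xm1 m)"
proof -
  have "[reflect_m m (a * g mod xm1 m) = xinv m (a * g mod xm1 m)] (mod xm1 m)"
    using degree_mod_xm1_less[OF m, of "a * g"] by (intro reflect_m_cong_xinv[OF m]) simp
  also have "[xinv m (a * g mod xm1 m) = xinv m (a * g)] (mod xm1 m)"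
    by (rule xinv_cong) (simp add: cong_def)
  also have "xinv m (a * g) = xinv m a * xinv m g" by simp
  also have "[xinv m a * xinv m g = xinv m a * reflect_m m g] (mod xm1 m)"
    by (rule cong_mult[OF cong_refl cong_sym[OF reflect_m_cong_xinv[OF m dg]]])
  finally have "[g * reflect_m m (a * g mod xm1 m) = g * (xinv m a * reflect_m m g)] (mod xm1 m)"
    by (rule cong_scalar_left)
  then show ?thesis by (simp add: mult_ac)
qed

lemma xinv_mult_reflect_m_cong:
  assumes m: "m \<ge> 1" and dg: "degree g \<le> m"
  shows "[xinv m (g * reflect_m m g) = g * reflect_m m (g :: 'a::field poly)] (mod xm1 m)"
proof -
  have "[xinv m (reflect_m m g) = xinv m (xinv m g)] (mod xm1 m)"
    by (intro xinv_cong m reflect_m_cong_xinv dg)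
  also have "[xinv m (xinv m g) = g] (mod xm1 m)" by (rule xinv_xinv[OF m])
  finally have "[xinv m g * xinv m (reflect_m m g) = reflect_m m g * g] (mod xm1 m)"
    by (intro cong_mult cong_sym[OF reflect_m_cong_xinv[OF m dg]])
  then show ?thesis by (simp add: mult.commute)
qed

lemma xm1_dvd_xinv_mult_iff:
  assumes m: "m \<ge> 1" and G: "[xinv m G = G] (mod xm1 m)"
  shows "xm1 m dvd xinv m a * G \<longleftrightarrow> xm1 m dvd a * (G :: 'a::field poly)"
proof -
  have swap: "xm1 m dvd xinv m b * G" if "xm1 m dvd b * G" for b
  proof -
    have "[xinv m (b * G) = xinv m b * G] (mod xm1 m)"
      unfolding xinv_mult by (rule cong_mult[OF cong_refl G])
    with xm1_dvd_xinv[OF that] show ?thesis by (simp add: cong_dvd_iff)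
  qed
  have "[xinv m (xinv m a) * G = a * G] (mod xm1 m)"
    by (rule cong_mult[OF xinv_xinv[OF m] cong_refl])
  then show ?thesis using swap[of a] swap[of "xinv m a"] by (auto simp: cong_dvd_iff)
qed

lemma qc_codeword_in_eucl_dual_iff:
  assumes m: "m \<ge> 1" and d1: "degree g11 \<le> m" and d2: "degree g12 \<le> m"
  shows "(a * g11 mod xm1 m, a * g12 mod xm1 m) \<in> eucl_dual m (qc_code m g11 g12) \<longleftrightarrow>
    xm1 m dvd a * (g11 * reflect_m m g11 + g12 * reflect_m m (g12 :: 'a::field poly))"
proof -
  let ?G = "g11 * reflect_m m g11 + g12 * reflect_m m g12"
  let ?w = "(a * g11 mod xm1 m, a * g12 mod xm1 m)"
  have w: "?w \<in> R2 m" unfolding R2_def using degree_mod_xm1_less[OF m] by blast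
  then have "?w \<in> eucl_dual m (qc_code m g11 g12) \<longleftrightarrow>
      (\<forall>c\<in>qc_code m g11 g12. eucl_ip m c ?w = 0)"
    unfolding eucl_dual_def by blast
  also have "\<dots> \<longleftrightarrow>
      xm1 m dvd g11 * reflect_m m (a * g11 mod xm1 m) + g12 * reflect_m m (a * g12 mod xm1 m)"
    using orthogonal_qc_code_iff[OF m w] by simp
  also have "\<dots> \<longleftrightarrow> xm1 m dvd xinv m a * ?G"
  proof -
    have "[g11 * reflect_m m (a * g11 mod xm1 m) + g12 * reflect_m m (a * g12 mod xm1 m) =
        xinv m a * (g11 * reflect_m m g11) + xinv m a * (g12 * reflect_m m g12)] (mod xm1 m)"
      by (intro cong_add mult_reflect_m_mod_xm1_cong m d1 d2)
    then show ?thesis by (simp add: cong_dvd_iff distrib_left)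
  qed
  also have "\<dots> \<longleftrightarrow> xm1 m dvd a * ?G"
    by (intro xm1_dvd_xinv_mult_iff m)
       (simp add: cong_add xinv_mult_reflect_m_cong[OF m d1] xinv_mult_reflect_m_cong[OF m d2]
         del: xinv_mult)
  finally show ?thesis .
qed

lemma dvd_mult_both_iff_div_gcd_dvd:
  fixes n g1 g2 :: "'a::semiring_gcd"
  assumes "n \<noteq> 0" "g1 dvd n"
  shows "(n dvd a * g1 \<and> n dvd a * g2) \<longleftrightarrow> (n div gcd g1 g2) dvd a"
proof -
  have gn: "gcd g1 g2 dvd n" using gcd_dvd1 assms(2) by (rule dvd_trans)
  have g0: "gcd g1 g2 \<noteq> 0" using assms by auto
  have "(n dvd a * g1 \<and> n dvd a * g2) \<longleftrightarrow> n dvd gcd (a * g1) (a * g2)" by simp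
  also have "\<dots> \<longleftrightarrow> n dvd a * gcd g1 g2" by (simp add: gcd_mult_left)
  also have "\<dots> \<longleftrightarrow> (n div gcd g1 g2) dvd a" using g0 gn by (simp add: div_dvd_iff_mult)
  finally show ?thesis .
qed

text \<open>A common non-unit factor \<open>c\<close> of \<open>h\<close> and \<open>G\<close> gives the counterexample \<open>a = n / c\<close>: then
  \<open>n | a G\<close>, while \<open>h | a\<close> would put \<open>c\<^sup>2\<close> into \<open>n\<close>.\<close>
lemma coprime_iff_dvd_mult_imp_dvd:
  fixes n h G :: "'a::semiring_gcd"
  assumes sf: "squarefree n" and hn: "h dvd n"
  shows "(\<forall>a. n dvd a * G \<longrightarrow> h dvd a) \<longleftrightarrow> coprime h G"
proof
  assume H: "\<forall>a. n dvd a * G \<longrightarrow> h dvd a"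
  show "coprime h G"
  proof (rule ccontr)
    assume "\<not> coprime h G"
    then obtain c where c: "c dvd h" "c dvd G" "\<not> is_unit c" by (rule not_coprimeE)
    obtain r where r: "n = c * r" using dvd_trans[OF c(1) hn] by (rule dvdE)
    have "n dvd r * G" unfolding r using mult_dvd_mono[OF dvd_refl[of r] c(2)] by (simp add: ac_simps)
    then have "h dvd r" using H by blast
    with c(1) have "c dvd r" by (rule dvd_trans)
    then have "c ^ 2 dvd n" unfolding r power2_eq_square by (rule mult_dvd_mono[OF dvd_refl])
    with sf c(3) show False by (auto dest: squarefreeD)
  qed
next
  assume "coprime h G"
  show "\<forall>a. n dvd a * G \<longrightarrow> h dvd a"
  proof (intro allI impI)
    fix a assume "n dvd a * G"
    with hn have "h dvd a * G" by (rule dvd_trans)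
    with \<open>coprime h G\<close> show "h dvd a" by (simp add: coprime_dvd_mult_left_iff)
  qed
qed

lemma euclidean_LCD_qc_code_iff:
  assumes m: "m \<ge> 1" and g11: "g11 dvd xm1 m" and d1: "degree g11 \<le> m" and d2: "degree g12 \<le> m"
  shows "euclidean_LCD m (qc_code m g11 g12) \<longleftrightarrow>
    (\<forall>a. xm1 m dvd a * (g11 * reflect_m m g11 + g12 * reflect_m m g12) \<longrightarrow>
      (xm1 m div gcd g11 g12) dvd (a :: 'a::field_gcd poly))"
proof -
  let ?C = "qc_code m g11 g12" and ?w = "\<lambda>a. (a * g11 mod xm1 m, a * g12 mod xm1 m)"
  have C: "?C = range ?w" unfolding qc_code_def by blast
  have ball_C: "(\<forall>x\<in>?C. P x) \<longleftrightarrow> (\<forall>a. P (?w a))" for P unfolding C by simp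
  have "?w 0 \<in> ?C" unfolding C by (rule rangeI)
  moreover have "?w 0 \<in> eucl_dual m ?C" unfolding qc_codeword_in_eucl_dual_iff[OF m d1 d2] by simp
  ultimately have "(0, 0) \<in> ?C \<inter> eucl_dual m ?C" by simp
  then have "euclidean_LCD m ?C \<longleftrightarrow> (\<forall>x\<in>?C. x \<in> eucl_dual m ?C \<longrightarrow> x = (0, 0))"
    unfolding euclidean_LCD_def by blast
  also have "\<dots> \<longleftrightarrow> (\<forall>a. ?w a \<in> eucl_dual m ?C \<longrightarrow> ?w a = (0, 0))"
    by (rule ball_C)
  also have "\<dots> \<longleftrightarrow> (\<forall>a. xm1 m dvd a * (g11 * reflect_m m g11 + g12 * reflect_m m g12) \<longrightarrow>
      (xm1 m div gcd g11 g12) dvd a)"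
    using dvd_mult_both_iff_div_gcd_dvd[OF xm1_neq_0[OF m] g11]
    by (simp add: qc_codeword_in_eucl_dual_iff[OF m d1 d2] dvd_eq_mod_eq_0)
  finally show ?thesis .
qed

theorem theorem4p3:
  fixes g11 g12 :: "'a::{field_gcd, finite} poly" and m :: nat
  assumes "m \<ge> 1"
    and "coprime (card (UNIV :: 'a set)) m"
    and "g11 dvd xm1 m"
    and "degree g12 < m"
  shows "euclidean_LCD m (qc_code m g11 g12) \<longleftrightarrow>
    gcd (xm1 m div gcd g11 g12)
        (g11 * reflect_m m g11 + g12 * reflect_m m g12) = 1"
proof -
  have d1: "degree g11 \<le> m"
    using dvd_imp_degree_le[OF assms(3) xm1_neq_0[OF assms(1)]] degree_xm1[OF assms(1), where 'a='a]
    by simp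
  have "gcd g11 g12 dvd xm1 m" using gcd_dvd1 assms(3) by (rule dvd_trans)
  moreover have "gcd g11 g12 \<noteq> 0" using calculation xm1_neq_0[OF assms(1)] by auto
  ultimately have "xm1 m div gcd g11 g12 dvd xm1 m" by (simp add: div_dvd_iff_mult)
  moreover have "squarefree (xm1 m :: 'a poly)"
    using squarefree_xm1 of_nat_neq_0_if_coprime_card assms(1,2) by blast
  ultimately show ?thesis
    unfolding euclidean_LCD_qc_code_iff[OF assms(1,3) d1 less_imp_le[OF assms(4)]]
    by (simp add: coprime_iff_dvd_mult_imp_dvd coprime_iff_gcd_eq_1)
qed

end
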